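(* Let $(r,t,s)$ be a vertex of the Farey tree $\mathrm{F}\mathbb T$ with $t\in(0,\infty)\cap\mathbb Q$. Then: (1) If $r=\frac01$ and $s\neq\frac10$, and the symmetric decomposition of $\omega_s$ is $w\alpha w^{-1}$, then $\omega_t=yz\,w\alpha^{-1}w^{-1}$. (2) If $r\neq\frac01$ and $s=\frac10$, and the symmetric decomposition of $\omega_r$ is $u\beta u^{-1}$, then $\omega_t=u\beta^{-1}u^{-1}\,xy$. (3) If $r\neq\frac01$ and $s\neq\frac10$, and the symmetric decompositions of $\omega_r$ and $\omega_s$ are $u\beta u^{-1}$ and $w\alpha w^{-1}$ respectively, then $\omega_t=u\beta^{-1}u^{-1}\,xyz\,w\alpha^{-1}w^{-1}$. All equalities are equalities of words.
   Context: Farey tree $\mathrm{F}\mathbb T$: rooted planar binary tree with root $(\frac01,\frac11,\frac10)$, and each vertex $(\frac ab,\frac cd,\frac ef)$ has left child $(\frac ab,\frac{a+c}{b+d},\frac cd)$ and right child $(\frac cd,\frac{c+e}{d+f},\frac ef)$; $\frac10$ represents $\infty$. Modified lattice: the planar graph with vertex set $\mathbb Z^2$ whose edges are the horizontal unit segments, the vertical unit segments, and the diagonal segments of slope $-1$ joining $(i,j+1)$ and $(i+1,j)$. Words $\omega_t$: $\omega_{0/1}=x$, $\omega_{1/0}=z$. For reduced $t=p/q\in(0,\infty)$, let $L_t$ be the segment from $(0,0)$ to $(q,p)$, oriented from $(0,0)$ to $(q,p)$. List the edges whose relative interior meets $L_t$, in the order of the intersection points along $L_t$. A horizontal (resp.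 diagonal, vertical) edge contributes $x$ (resp. $y$, $z$) if its midpoint is not on the right-hand side of $L_t$ (including lying on $L_t$), and $x^{-1}$ (resp. $y^{-1}$, $z^{-1}$) if its midpoint is on the right-hand side. $\omega_t$ is the concatenation of these letters. Symmetric decomposition: every $\omega_t$ can be written as a word $w\alpha w^{-1}$ with $w$ a word and $\alpha\in\{x,y,z\}$ a letter; this expression is called the symmetric decomposition of $\omega_t$. *)

theory Defs
  imports Complex_Main
begin

datatype gen = X | Y | Z

text \<open>A letter is a generator with a sign: (g, True) is g, (g, False) is g inverse.\<close>
type_synonym letter = "gen \<times> bool"
type_synonym word = "letter list"

definition inv_letter :: "letter \<Rightarrow> letter" where
  "inv_letter l = (fst l, \<not> snd l)"

definition inv_word :: "word \<Rightarrow> word" where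
  "inv_word w = rev (map inv_letter w)"

abbreviation lx :: letter where "lx \<equiv> (X, True)"
abbreviation ly :: letter where "ly \<equiv> (Y, True)"
abbreviation lz :: letter where "lz \<equiv> (Z, True)"

text \<open>A fraction a/b is represented by the pair (a, b) of naturals; (1,0) is infinity.
  A vertex is a triple of such pairs.\<close>
type_synonym frac = "nat \<times> nat"

inductive farey_vertex :: "frac \<times> frac \<times> frac \<Rightarrow> bool" where
  root: "farey_vertex ((0,1), (1,1), (1,0))"
| left: "farey_vertex ((a,b), (c,d), (e,f)) \<Longrightarrow> farey_vertex ((a,b), (a+c, b+d), (c,d))"
| right: "farey_vertex ((a,b), (c,d), (e,f)) \<Longrightarrow> farey_vertex ((c,d), (c+e, d+f), (e,f))"

datatype edge = Hor int int | Ver int int | Dia int int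

fun edge_start :: "edge \<Rightarrow> real \<times> real" where
  "edge_start (Hor i j) = (of_int i, of_int j)"
| "edge_start (Ver i j) = (of_int i, of_int j)"
| "edge_start (Dia i j) = (of_int i, of_int j + 1)"

fun edge_end :: "edge \<Rightarrow> real \<times> real" where
  "edge_end (Hor i j) = (of_int i + 1, of_int j)"
| "edge_end (Ver i j) = (of_int i, of_int j + 1)"
| "edge_end (Dia i j) = (of_int i + 1, of_int j)"

fun edge_gen :: "edge \<Rightarrow> gen" where
  "edge_gen (Hor i j) = X"
| "edge_gen (Dia i j) = Y"
| "edge_gen (Ver i j) = Z"

definition crosses_at :: "nat \<Rightarrow> nat \<Rightarrow> edge \<Rightarrow> real \<Rightarrow> bool" where
  "crosses_at p q e s \<longleftrightarrow> 0 \<le> s \<and> s \<le> 1 \<and>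
     (\<exists>lam. 0 < lam \<and> lam < 1 \<and>
        fst (edge_start e) + lam * (fst (edge_end e) - fst (edge_start e)) = s * real q \<and>
        snd (edge_start e) + lam * (snd (edge_end e) - snd (edge_start e)) = s * real p)"

definition crossing_edges :: "nat \<Rightarrow> nat \<Rightarrow> edge set" where
  "crossing_edges p q = {e. \<exists>s. crosses_at p q e s}"

definition cross_param :: "nat \<Rightarrow> nat \<Rightarrow> edge \<Rightarrow> real" where
  "cross_param p q e = (THE s. crosses_at p q e s)"

text \<open>Letter contributed by an edge: positive iff the midpoint is not strictly on the
  right-hand side of L oriented from (0,0) to (q,p), i.e. iff q*my - p*mx >= 0.\<close>
definition edge_letter :: "nat \<Rightarrow> nat \<Rightarrow> edge \<Rightarrow> letter" where
  "edge_letter p q e =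
     (let mx = (fst (edge_start e) + fst (edge_end e)) / 2;
          my = (snd (edge_start e) + snd (edge_end e)) / 2
      in (edge_gen e, real q * my - real p * mx \<ge> 0))"

definition omega_geom :: "nat \<Rightarrow> nat \<Rightarrow> word" where
  "omega_geom p q = (THE ws. \<exists>es. distinct es \<and> set es = crossing_edges p q \<and>
       sorted (map (cross_param p q) es) \<and> ws = map (edge_letter p q) es)"

definition omega :: "frac \<Rightarrow> word" where
  "omega t = (let a = fst t; b = snd t; g = gcd a b; p = a div g; q = b div g in
     if p = 0 then [lx] else if q = 0 then [lz] else omega_geom p q)"

end

theory Submission
  imports Defs
begin

text \<open>
  Write \<open>r = a/b\<close>, \<open>s = c/d\<close> and \<open>t = (a+c)/(b+d)\<close> with \<open>b c - a d = 1\<close>, and compare the segment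
  \<open>L\<^sub>t\<close> from \<open>(0,0)\<close> to \<open>(b+d,a+c)\<close> with the path formed by \<open>L\<^sub>r\<close> and \<open>L\<^sub>s + (b,a)\<close>.  As \<open>(b,a)\<close> and
  \<open>(d,c)\<close> form a basis of \<open>\<int>\<^sup>2\<close>, no lattice point near the path lies strictly between the path and
  \<open>L\<^sub>t\<close>.  Hence \<open>L\<^sub>t\<close> crosses the edges crossed by \<open>L\<^sub>r\<close>, then the edges at the corner \<open>(b,a)\<close>,
  which give \<open>x y z\<close>, then the translates of the edges crossed by \<open>L\<^sub>s\<close>, in this order, and the
  midpoints of all these edges keep their side, except the midpoints of \<open>L\<^sub>r\<close> and of \<open>L\<^sub>s + (b,a)\<close>,
  which lie on the path but strictly to the right of \<open>L\<^sub>t\<close>.  By central symmetry the edge through the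
  midpoint of a segment carries the middle letter of its word, so exactly the two middle letters are
  inverted.
\<close>

section \<open>Crossings in integer arithmetic\<close>

text \<open>\<open>side p q u v\<close> is positive iff \<open>(u, v)\<close> lies strictly to the right of the line through the
  origin in direction \<open>(q, p)\<close>.\<close>
definition side :: "int \<Rightarrow> int \<Rightarrow> int \<Rightarrow> int \<Rightarrow> int" where
  "side p q u v = u * p - v * q"

text \<open>The endpoints of the edge lie strictly on opposite sides of the line, and the crossing point lies
  on the segment from \<open>(0, 0)\<close> to \<open>(q, p)\<close>, i.e. \<open>0 \<le> crossing_time p q e \<le> 1\<close>.\<close>
fun crosses :: "int \<Rightarrow> int \<Rightarrow> edge \<Rightarrow> bool" where
  "crosses p q (Ver i j) \<longleftrightarrow> 0 \<le> i \<and> i \<le> q \<and> side p q i j > 0 \<and> side p q i (j + 1) < 0"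
| "crosses p q (Hor i j) \<longleftrightarrow> 0 \<le> j \<and> j \<le> p \<and> side p q i j < 0 \<and> side p q (i + 1) j > 0"
| "crosses p q (Dia i j) \<longleftrightarrow> 0 \<le> i + j + 1 \<and> i + j + 1 \<le> p + q \<and>
     side p q i (j + 1) < 0 \<and> side p q (i + 1) j > 0"

fun crossing_time :: "int \<Rightarrow> int \<Rightarrow> edge \<Rightarrow> real" where
  "crossing_time p q (Ver i j) = of_int i / of_int q"
| "crossing_time p q (Hor i j) = of_int j / of_int p"
| "crossing_time p q (Dia i j) = of_int (i + j + 1) / of_int (p + q)"

lemma side_pos_iff_real: "0 < side p q u v \<longleftrightarrow> real_of_int v * of_int q < of_int u * of_int p"
  by (simp add: side_def flip: of_int_mult)

lemma side_neg_iff_real: "side p q u v < 0 \<longleftrightarrow> real_of_int u * of_int p < of_int v * of_int q"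
  by (simp add: side_def flip: of_int_mult)

lemma crosses_at_iff:
  fixes p q :: nat
  assumes p: "0 < p" and q: "0 < q"
  shows "crosses_at p q e s \<longleftrightarrow> crosses p q e \<and> s = crossing_time p q e"
proof -
  note div_iff = pos_divide_less_eq pos_less_divide_eq pos_divide_le_eq pos_le_divide_eq
  have of_nat_bound: "real_of_int x \<le> real n \<longleftrightarrow> x \<le> int n" for x n
    by (metis of_int_le_iff of_int_of_nat_eq)
  show ?thesis
  proof (cases e)
    case (Ver i j)
    have "of_int i = s * q \<longleftrightarrow> s = i / q" using q by (auto simp: field_simps)
    then have "crosses_at p q e s \<longleftrightarrow>
        s = i / q \<and> 0 \<le> i / q \<and> i / q \<le> 1 \<and> of_int j < i * p / q \<and> i * p / q < of_int j + 1"
      by (auto simp: Ver crosses_at_def intro!: exI[of _ "s * p - j"])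
    also have "\<dots> \<longleftrightarrow> crosses p q e \<and> s = crossing_time p q e"
      using p q by (simp add: Ver side_pos_iff_real side_neg_iff_real div_iff conj_commute of_nat_bound)
    finally show ?thesis .
  next
    case (Hor i j)
    have "of_int j = s * p \<longleftrightarrow> s = j / p" using p by (auto simp: field_simps)
    then have "crosses_at p q e s \<longleftrightarrow>
        s = j / p \<and> 0 \<le> j / p \<and> j / p \<le> 1 \<and> of_int i < j * q / p \<and> j * q / p < of_int i + 1"
      by (auto simp: Hor crosses_at_def intro!: exI[of _ "s * q - i"])
    also have "\<dots> \<longleftrightarrow> crosses p q e \<and> s = crossing_time p q e"
      using p q by (simp add: Hor side_pos_iff_real side_neg_iff_real div_iff conj_commute of_nat_bound)
    finally show ?thesis .
  next
    case (Dia i j)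
    define k where "k = i + j + 1"
    have k_eq: "of_int k = s * (p + q) \<longleftrightarrow> s = k / (p + q)" using p by (auto simp: field_simps)
    have "crosses_at p q e s \<longleftrightarrow>
        0 \<le> s \<and> s \<le> 1 \<and> of_int k = s * (p + q) \<and> of_int i < s * q \<and> s * q < of_int i + 1"
      by (auto simp: Dia k_def crosses_at_def algebra_simps intro!: exI[of _ "s * q - i"])
    also have "\<dots> \<longleftrightarrow> s = k / (p + q) \<and> 0 \<le> k / (p + q) \<and> k / (p + q) \<le> 1 \<and>
        of_int i < k * q / (p + q) \<and> k * q / (p + q) < of_int i + 1"
      unfolding k_eq by auto
    also have "\<dots> \<longleftrightarrow> crosses p q e \<and> s = crossing_time p q e"
      using p q of_nat_bound[of k "p + q"] of_int_0_le_iff[of k, where 'a = real]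
      by (simp add: Dia k_def side_pos_iff_real side_neg_iff_real div_iff conj_commute algebra_simps)
    finally show ?thesis .
  qed
qed

lemma frac_notin_Ints:
  assumes "0 < x" "x < 1"
  shows "(x::real) \<notin> \<int>"
  using assms by (auto elim!: Ints_cases)

text \<open>The crossing point determines the edge: distinct edges of the modified lattice have disjoint
  relative interiors.\<close>
lemma crosses_at_edge:
  assumes "crosses_at p q e s"
  shows "e = (if s * q \<in> \<int> then Ver \<lfloor>s * q\<rfloor> \<lfloor>s * p\<rfloor>
              else if s * p \<in> \<int> then Hor \<lfloor>s * q\<rfloor> \<lfloor>s * p\<rfloor> else Dia \<lfloor>s * q\<rfloor> \<lfloor>s * p\<rfloor>)"
proof -
  obtain lam where lam: "0 < lam" "lam < 1"
    and x: "s * q = fst (edge_start e) + lam * (fst (edge_end e) - fst (edge_start e))"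
    and y: "s * p = snd (edge_start e) + lam * (snd (edge_end e) - snd (edge_start e))"
    using assms by (auto simp: crosses_at_def)
  have frac: "lam \<notin> \<int>" "1 - lam \<notin> \<int>" using lam by (simp_all add: frac_notin_Ints)
  have floors: "\<lfloor>of_int j + lam\<rfloor> = j" "\<lfloor>of_int j + 1 - lam\<rfloor> = j" for j
    using lam by (simp_all add: floor_eq_iff)
  show ?thesis
    using frac floors unfolding x y by (cases e) auto
qed

lemma crosses_at_unique_edge: "crosses_at p q e s \<Longrightarrow> crosses_at p q e' s \<Longrightarrow> e = e'"
  using crosses_at_edge by metis

lemma crossing_time_inj:
  assumes "0 < p" "0 < q" "crosses p q e" "crosses p q e'" "crossing_time p q e = crossing_time p q e'"
  shows "e = e'"
proof -
  have "crosses_at (nat p) (nat q) e (crossing_time p q e)"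
    "crosses_at (nat p) (nat q) e' (crossing_time p q e)"
    using assms by (simp_all add: crosses_at_iff)
  then show ?thesis by (rule crosses_at_unique_edge)
qed

lemma no_multiple_strictly_between:
  fixes a b c :: int
  assumes "a * c < b * c" "b * c < (a + 1) * c" "0 \<le> c"
  shows False
  using mult_right_less_imp_less[OF assms(1,3)] mult_right_less_imp_less[OF assms(2,3)] by linarith

lemma crosses_Ver_bounds:
  assumes "crosses p q (Ver i j)" "0 \<le> p"
  shows "0 < i \<and> i < q \<and> 0 \<le> j \<and> j < p"
proof -
  have i: "0 \<le> i" "i \<le> q" and band: "j * q < i * p" "i * p < (j + 1) * q"
    using assms(1) by (simp_all add: side_def)
  have "0 * q < (j + 1) * q" using band(2) mult_nonneg_nonneg[OF i(1) assms(2)] by simp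
  moreover have "j * q < p * q" using band(1) mult_right_mono[OF i(2) assms(2)] by (simp add: mult.commute)
  ultimately have "0 < j + 1" "j < p" using i by (meson mult_right_less_imp_less order.trans)+
  moreover have "i \<noteq> 0" using band no_multiple_strictly_between[of j q 0] i by auto
  moreover have "i \<noteq> q" using band no_multiple_strictly_between[of j q p] i by (auto simp: mult.commute)
  ultimately show ?thesis using i by auto
qed

lemma crosses_Hor_bounds:
  assumes "crosses p q (Hor i j)" "0 \<le> p" "0 \<le> q"
  shows "0 \<le> i \<and> i < q \<and> 0 < j \<and> j < p"
proof -
  have j: "0 \<le> j" "j \<le> p" and band: "i * p < j * q" "j * q < (i + 1) * p"
    using assms(1) by (simp_all add: side_def)
  have "0 * p < (i + 1) * p" using band(2) mult_nonneg_nonneg[OF j(1) assms(3)] by simp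
  moreover have "i * p < q * p" using band(1) mult_right_mono[OF j(2) assms(3)] by (simp add: mult.commute)
  ultimately have "0 < i + 1" "i < q" using assms(2) by (meson mult_right_less_imp_less)+
  moreover have "j \<noteq> 0" using band no_multiple_strictly_between[of i p 0] assms(2) by auto
  moreover have "j \<noteq> p" using band no_multiple_strictly_between[of i p q] assms(2) by (auto simp: mult.commute)
  ultimately show ?thesis using j by auto
qed

lemma crosses_Dia_bounds:
  assumes "crosses p q (Dia i j)" "0 \<le> p" "0 \<le> q"
  shows "0 \<le> i \<and> i < q \<and> 0 \<le> j \<and> j < p"
proof -
  have k: "0 \<le> i + j + 1" "i + j + 1 \<le> p + q" and band: "i * p < (j + 1) * q" "j * q < (i + 1) * p"
    using assms(1) by (simp_all add: side_def algebra_simps)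
  have "0 \<le> i"
  proof (rule ccontr)
    assume "\<not> 0 \<le> i"
    then have "(i + 1) * p \<le> 0 * q" using assms(2) by (simp add: mult_nonpos_nonneg)
    then have "j < 0" using band(2) assms(3) by (meson less_le_trans mult_right_less_imp_less)
    then show False using k \<open>\<not> 0 \<le> i\<close> by linarith
  qed
  moreover have "0 \<le> j"
  proof (rule ccontr)
    assume "\<not> 0 \<le> j"
    then have "(j + 1) * q \<le> 0 * p" using assms(3) by (simp add: mult_nonpos_nonneg)
    then have "i < 0" using band(1) assms(2) by (meson less_le_trans mult_right_less_imp_less)
    then show False using k \<open>\<not> 0 \<le> j\<close> by linarith
  qed
  moreover have "i < q"
  proof (rule ccontr)
    assume "\<not> i < q"
    then have "q * p \<le> i * p" using assms(2) by (simp add: mult_right_mono)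
    then have "p * q < (j + 1) * q" using band(1) by (simp add: mult.commute)
    then have "p < j + 1" using assms(3) by (rule mult_right_less_imp_less)
    then show False using k \<open>\<not> i < q\<close> by linarith
  qed
  moreover have "j < p"
  proof (rule ccontr)
    assume "\<not> j < p"
    then have "p * q \<le> j * q" using assms(3) by (simp add: mult_right_mono)
    then have "q * p < (i + 1) * p" using band(2) by (simp add: mult.commute)
    then have "q < i + 1" using assms(2) by (rule mult_right_less_imp_less)
    then show False using k \<open>\<not> j < p\<close> by linarith
  qed
  ultimately show ?thesis by simp
qed

lemma crosses_Ver_iff:
  assumes "0 \<le> p"
  shows "crosses p q (Ver i j) \<longleftrightarrow> 0 < i \<and> i < q \<and> side p q i j > 0 \<and> side p q i (j + 1) < 0"
proof
  assume "crosses p q (Ver i j)"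
  then show "0 < i \<and> i < q \<and> side p q i j > 0 \<and> side p q i (j + 1) < 0"
    using crosses_Ver_bounds[OF _ assms, of q i j] by simp
qed simp

lemma crosses_Hor_iff:
  assumes "0 \<le> p" "0 \<le> q"
  shows "crosses p q (Hor i j) \<longleftrightarrow> 0 \<le> i \<and> i < q \<and> side p q i j < 0 \<and> side p q (i + 1) j > 0"
proof
  assume x: "0 \<le> i \<and> i < q \<and> side p q i j < 0 \<and> side p q (i + 1) j > 0"
  then have band: "i * p < j * q" "j * q < (i + 1) * p" by (simp_all add: side_def)
  have "0 \<le> i * p" using x assms by simp
  then have "0 * q < j * q" using band(1) by simp
  then have "0 < j" using assms(2) by (rule mult_right_less_imp_less)
  have "(i + 1) * p \<le> q * p" using x assms by (intro mult_right_mono) auto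
  then have "j * q < p * q" using band(2) mult.commute[of q p] by linarith
  then have "j < p" using assms(2) by (rule mult_right_less_imp_less)
  with \<open>0 < j\<close> x show "crosses p q (Hor i j)" by simp
next
  assume "crosses p q (Hor i j)"
  then show "0 \<le> i \<and> i < q \<and> side p q i j < 0 \<and> side p q (i + 1) j > 0"
    using crosses_Hor_bounds[OF _ assms, of i j] by simp
qed

lemma crosses_Dia_iff:
  assumes "0 \<le> p" "0 \<le> q"
  shows "crosses p q (Dia i j) \<longleftrightarrow> 0 \<le> i \<and> i < q \<and> side p q i (j + 1) < 0 \<and> side p q (i + 1) j > 0"
proof
  assume x: "0 \<le> i \<and> i < q \<and> side p q i (j + 1) < 0 \<and> side p q (i + 1) j > 0"
  then have band: "i * p < (j + 1) * q" "j * q < (i + 1) * p" by (simp_all add: side_def)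
  have "0 \<le> i * p" using x assms by simp
  then have "0 * q < (j + 1) * q" using band(1) by simp
  then have "0 < j + 1" using assms(2) by (rule mult_right_less_imp_less)
  have "(i + 1) * p \<le> q * p" using x assms by (intro mult_right_mono) auto
  then have "j * q < p * q" using band(2) mult.commute[of q p] by linarith
  then have "j < p" using assms(2) by (rule mult_right_less_imp_less)
  with \<open>0 < j + 1\<close> x show "crosses p q (Dia i j)" by simp
next
  assume "crosses p q (Dia i j)"
  then show "0 \<le> i \<and> i < q \<and> side p q i (j + 1) < 0 \<and> side p q (i + 1) j > 0"
    using crosses_Dia_bounds[OF _ assms, of i j] by simp
qed

lemma crosses_pos:
  assumes "crosses p q e" "0 \<le> p" "0 \<le> q"
  shows "0 < p \<and> 0 < q"
proof (cases e)
  case (Ver i j)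
  then have "0 < i \<and> i < q \<and> 0 \<le> j \<and> j < p" using assms crosses_Ver_bounds by blast
  then show ?thesis by linarith
next
  case (Hor i j)
  then have "0 \<le> i \<and> i < q \<and> 0 < j \<and> j < p" using assms crosses_Hor_bounds by blast
  then show ?thesis by linarith
next
  case (Dia i j)
  then have "0 \<le> i \<and> i < q \<and> 0 \<le> j \<and> j < p" using assms crosses_Dia_bounds by blast
  then show ?thesis by linarith
qed

declare crosses.simps [simp del]

section \<open>Crossing lists\<close>

lemma crossing_edges_eq: "0 < p \<Longrightarrow> 0 < q \<Longrightarrow> crossing_edges p q = {e. crosses p q e}"
  by (auto simp: crossing_edges_def crosses_at_iff)

lemma cross_param_eq: "0 < p \<Longrightarrow> 0 < q \<Longrightarrow> crosses p q e \<Longrightarrow> cross_param p q e = crossing_time p q e"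
  unfolding cross_param_def by (auto simp: crosses_at_iff)

definition crossing_list :: "int \<Rightarrow> int \<Rightarrow> edge list \<Rightarrow> bool" where
  "crossing_list p q es \<longleftrightarrow> distinct es \<and> set es = {e. crosses p q e} \<and> sorted (map (crossing_time p q) es)"

lemma sorted_distinct_inj_unique:
  assumes "distinct xs" "distinct ys" "set xs = set ys" "inj_on f (set xs)"
    "sorted (map f xs)" "sorted (map f ys)"
  shows "xs = ys"
proof -
  have "map f xs = map f ys"
    using assms by (intro sorted_distinct_set_unique) (auto simp: distinct_map inj_on_subset)
  then show ?thesis using assms(3,4) inj_on_map_eq_map[of f xs ys] by simp
qed

lemma omega_geom_eq:
  fixes p q :: nat
  assumes p: "0 < p" and q: "0 < q" and es: "crossing_list p q es"
  shows "omega_geom p q = map (edge_letter p q) es"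
  unfolding omega_geom_def
proof (rule the_equality)
  have params: "map (cross_param p q) xs = map (crossing_time p q) xs"
    if "set xs = {e. crosses p q e}" for xs
    using that cross_param_eq[OF p q] by simp
  have inj: "inj_on (crossing_time p q) {e. crosses p q e}"
    using crossing_time_inj[of p q] p q by (auto intro: inj_onI)
  have eq: "map (cross_param p q) es = map (crossing_time p q) es"
    using es by (intro params) (simp add: crossing_list_def)
  show "\<exists>es'. distinct es' \<and> set es' = crossing_edges p q \<and> sorted (map (cross_param p q) es') \<and>
      map (edge_letter p q) es = map (edge_letter p q) es'"
  proof (intro exI[of _ es] conjI refl)
    show "sorted (map (cross_param p q) es)" unfolding eq using es by (simp add: crossing_list_def)
  qed (use es in \<open>auto simp: crossing_list_def crossing_edges_eq p q\<close>)
  fix ws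
  assume "\<exists>es'. distinct es' \<and> set es' = crossing_edges p q \<and> sorted (map (cross_param p q) es') \<and>
      ws = map (edge_letter p q) es'"
  then obtain es' where
    es': "distinct es'" "set es' = {e. crosses p q e}" "sorted (map (cross_param p q) es')"
      and ws: "ws = map (edge_letter p q) es'"
    by (auto simp: crossing_edges_eq p q)
  have "sorted (map (crossing_time p q) es')" using es'(3) unfolding params[OF es'(2)] .
  then have "es' = es"
    using es es' inj
    by (intro sorted_distinct_inj_unique[where f = "crossing_time p q"]) (simp_all add: crossing_list_def)
  then show "ws = map (edge_letter p q) es" by (simp add: ws)
qed

lemma finite_crosses:
  assumes "0 \<le> p" "0 \<le> q"
  shows "finite {e. crosses p q e}"
proof (rule finite_subset)
  show "{e. crosses p q e} \<subseteq> (\<Union>(i, j) \<in> {0..q} \<times> {0..p}. {Ver i j, Hor i j, Dia i j})"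
  proof
    fix e assume e: "e \<in> {e. crosses p q e}"
    show "e \<in> (\<Union>(i, j) \<in> {0..q} \<times> {0..p}. {Ver i j, Hor i j, Dia i j})"
    proof (cases e)
      case (Ver i j) then show ?thesis using e assms crosses_Ver_bounds[of p q i j] by auto
    next
      case (Hor i j) then show ?thesis using e assms crosses_Hor_bounds[of p q i j] by auto
    next
      case (Dia i j) then show ?thesis using e assms crosses_Dia_bounds[of p q i j] by auto
    qed
  qed
qed auto

lemma crossing_list_exists:
  assumes "0 \<le> p" "0 \<le> q"
  obtains es where "crossing_list p q es"
proof -
  obtain xs where "set xs = {e. crosses p q e}" "distinct xs"
    using finite_distinct_list[OF finite_crosses[OF assms]] by blast
  then have "crossing_list p q (sort_key (crossing_time p q) xs)"
    by (simp add: crossing_list_def)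
  then show thesis by (rule that)
qed

lemma crossing_list_strict:
  assumes p: "0 < p" and q: "0 < q"
  shows "crossing_list p q es \<longleftrightarrow>
    set es = {e. crosses p q e} \<and> sorted_wrt (\<lambda>e e'. crossing_time p q e < crossing_time p q e') es"
proof -
  have "inj_on (crossing_time p q) {e. crosses p q e}"
    using crossing_time_inj[OF p q] by (auto intro: inj_onI)
  then show ?thesis
    using strict_sorted_iff[of "map (crossing_time p q) es"]
    by (auto simp: crossing_list_def sorted_wrt_map distinct_map)
qed

text \<open>\<open>precedes p q e e'\<close>: the segment meets the grid line carrying \<open>e\<close> before the one carrying
  \<open>e'\<close>.  For grid lines of different directions this is decided by the side of their intersection
  point.\<close>
fun precedes :: "int \<Rightarrow> int \<Rightarrow> edge \<Rightarrow> edge \<Rightarrow> bool" where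
  "precedes p q (Ver i j) (Ver i' j') \<longleftrightarrow> i < i'"
| "precedes p q (Ver i j) (Hor i' j') \<longleftrightarrow> side p q i j' < 0"
| "precedes p q (Ver i j) (Dia i' j') \<longleftrightarrow> side p q i (i' + j' + 1 - i) < 0"
| "precedes p q (Hor i j) (Ver i' j') \<longleftrightarrow> 0 < side p q i' j"
| "precedes p q (Hor i j) (Hor i' j') \<longleftrightarrow> j < j'"
| "precedes p q (Hor i j) (Dia i' j') \<longleftrightarrow> 0 < side p q (i' + j' + 1 - j) j"
| "precedes p q (Dia i j) (Ver i' j') \<longleftrightarrow> 0 < side p q i' (i + j + 1 - i')"
| "precedes p q (Dia i j) (Hor i' j') \<longleftrightarrow> side p q (i + j + 1 - j') j' < 0"
| "precedes p q (Dia i j) (Dia i' j') \<longleftrightarrow> i + j < i' + j'"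

lemma of_int_divide_less_iff:
  assumes "0 < y" "0 < w"
  shows "real_of_int x / of_int y < of_int z / of_int w \<longleftrightarrow> x * w < z * y"
proof -
  have "real_of_int x / of_int y < of_int z / of_int w \<longleftrightarrow>
      of_int x * of_int w < (of_int z * of_int y :: real)"
    using assms by (simp add: field_simps)
  also have "\<dots> \<longleftrightarrow> x * w < z * y"
    by (metis of_int_less_iff of_int_mult)
  finally show ?thesis .
qed

lemma crossing_time_less_iff:
  assumes "0 < p" "0 < q"
  shows "crossing_time p q e < crossing_time p q e' \<longleftrightarrow> precedes p q e e'"
  using assms
  by (cases e; cases e')
     (simp_all add: of_int_divide_less_iff side_def del: of_int_add, auto simp: algebra_simps)

section \<open>The middle letter\<close>

text \<open>The image under the point reflection \<open>(x, y) \<mapsto> (q - x, p - y)\<close>, which reverses the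
  segment.\<close>
fun reflect_edge :: "int \<Rightarrow> int \<Rightarrow> edge \<Rightarrow> edge" where
  "reflect_edge p q (Ver i j) = Ver (q - i) (p - 1 - j)"
| "reflect_edge p q (Hor i j) = Hor (q - 1 - i) (p - j)"
| "reflect_edge p q (Dia i j) = Dia (q - 1 - i) (p - 1 - j)"

lemma reflect_edge_reflect_edge [simp]: "reflect_edge p q (reflect_edge p q e) = e"
  by (cases e) auto

lemma crosses_reflect_edge: "crosses p q e \<Longrightarrow> crosses p q (reflect_edge p q e)"
  by (cases e) (auto simp: crosses.simps side_def algebra_simps)

lemma crossing_time_reflect_edge:
  "0 < p \<Longrightarrow> 0 < q \<Longrightarrow> crossing_time p q (reflect_edge p q e) = 1 - crossing_time p q e"
  by (cases e) (auto simp: field_simps)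

lemma crossing_list_reflect:
  assumes p: "0 < p" and q: "0 < q" and es: "crossing_list p q es"
  shows "rev (map (reflect_edge p q) es) = es"
proof (rule sorted_distinct_inj_unique)
  have "inj (reflect_edge p q)" by (metis injI reflect_edge_reflect_edge)
  then show "distinct (rev (map (reflect_edge p q) es))"
    using es by (simp add: crossing_list_def distinct_map inj_on_subset[OF \<open>inj (reflect_edge p q)\<close>])
  have "reflect_edge p q ` {e. crosses p q e} = {e. crosses p q e}"
    by (auto simp: crosses_reflect_edge
        intro!: image_eqI[of _ "reflect_edge p q", OF reflect_edge_reflect_edge[symmetric]])
  then show "set (rev (map (reflect_edge p q) es)) = set es" using es by (simp add: crossing_list_def)
  show "inj_on (crossing_time p q) (set (rev (map (reflect_edge p q) es)))"
    using crossing_time_inj[OF p q] \<open>set (rev (map (reflect_edge p q) es)) = set es\<close> es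
    by (auto simp: crossing_list_def intro!: inj_onI)
  have "sorted_wrt (\<lambda>x y. crossing_time p q x \<le> crossing_time p q y) es"
    using es by (simp add: crossing_list_def sorted_wrt_map)
  then show "sorted (map (crossing_time p q) (rev (map (reflect_edge p q) es)))"
    by (simp add: rev_map[symmetric] sorted_wrt_map sorted_wrt_rev crossing_time_reflect_edge p q)
qed (use es in \<open>simp_all add: crossing_list_def\<close>)

lemma crossing_list_middle:
  assumes p: "0 < p" and q: "0 < q" and es: "crossing_list p q es"
    and len: "length es = 2 * n + 1" and k: "k < length es"
  shows "crossing_time p q (es ! k) = 1 / 2 \<longleftrightarrow> k = n"
proof -
  have "es ! n = rev (map (reflect_edge p q) es) ! n"
    using crossing_list_reflect[OF p q es] by simp
  also have "\<dots> = reflect_edge p q (es ! n)"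
    using len by (simp add: rev_nth)
  finally have "crossing_time p q (es ! n) = 1 - crossing_time p q (es ! n)"
    using crossing_time_reflect_edge[OF p q] by metis
  then have mid: "crossing_time p q (es ! n) = 1 / 2"
    by simp
  show ?thesis
  proof
    assume "crossing_time p q (es ! k) = 1 / 2"
    moreover have "es ! k \<in> set es" "es ! n \<in> set es" using k len by simp_all
    ultimately have "es ! k = es ! n"
      using es crossing_time_inj[OF p q] mid by (auto simp: crossing_list_def)
    then show "k = n" using es k len by (simp add: crossing_list_def nth_eq_iff_index_eq)
  qed (use mid in simp)
qed

fun twice_mid :: "edge \<Rightarrow> int \<times> int" where
  "twice_mid (Ver i j) = (2 * i, 2 * j + 1)"
| "twice_mid (Hor i j) = (2 * i + 1, 2 * j)"
| "twice_mid (Dia i j) = (2 * i + 1, 2 * j + 1)"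

definition edge_letter_int :: "int \<Rightarrow> int \<Rightarrow> edge \<Rightarrow> letter" where
  "edge_letter_int p q e = (edge_gen e, side p q (fst (twice_mid e)) (snd (twice_mid e)) \<le> 0)"

lemma edge_letter_eq: "edge_letter p q = edge_letter_int p q"
proof
  fix e
  obtain u v where uv: "twice_mid e = (u, v)" by force
  then have "fst (edge_start e) + fst (edge_end e) = u" "snd (edge_start e) + snd (edge_end e) = v"
    by (cases e; auto)+
  moreover have "real q * (v / 2) - real p * (u / 2) \<ge> 0 \<longleftrightarrow> real_of_int (side p q u v) \<le> 0"
    by (simp add: side_def algebra_simps)
  ultimately show "edge_letter p q e = edge_letter_int p q e"
    unfolding edge_letter_def edge_letter_int_def uv Let_def of_int_le_0_iff by simp
qed

lemma crossing_time_half_iff: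
  assumes p: "0 < p" and q: "0 < q" and e: "crosses p q e"
  shows "crossing_time p q e = 1 / 2 \<longleftrightarrow> twice_mid e = (q, p)"
proof
  assume half: "crossing_time p q e = 1 / 2"
  then have "reflect_edge p q e = e"
    using crossing_time_inj[OF p q crosses_reflect_edge[OF e] e] crossing_time_reflect_edge[OF p q]
    by simp
  then show "twice_mid e = (q, p)" by (cases e) auto
next
  assume "twice_mid e = (q, p)"
  then show "crossing_time p q e = 1 / 2"
    using p q by (cases e) (auto simp: field_simps)
qed

lemma map_update_middle:
  assumes p: "0 < p" and q: "0 < q" and es: "crossing_list p q es"
    and f: "map f es = u @ [\<beta>] @ inv_word u"
    and g: "\<And>e. e \<in> set es \<Longrightarrow> crossing_time p q e \<noteq> 1 / 2 \<Longrightarrow> g e = f e"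
      "\<And>e. e \<in> set es \<Longrightarrow> crossing_time p q e = 1 / 2 \<Longrightarrow> g e = inv_letter (f e)"
  shows "map g es = u @ [inv_letter \<beta>] @ inv_word u"
proof -
  let ?n = "length u"
  have len: "length es = 2 * ?n + 1" using arg_cong[OF f, of length] by (simp add: inv_word_def)
  have "f (es ! ?n) = \<beta>" using arg_cong[OF f, of "\<lambda>xs. xs ! ?n"] len by simp
  have "map g es = (map f es)[?n := inv_letter (f (es ! ?n))]"
  proof (rule nth_equalityI)
    fix k assume "k < length (map g es)"
    then show "map g es ! k = (map f es)[?n := inv_letter (f (es ! ?n))] ! k"
      using g crossing_list_middle[OF p q es len, of k] len by (auto simp: nth_list_update)
  qed simp
  then show ?thesis using f \<open>f (es ! ?n) = \<beta>\<close> by (simp add: list_update_append)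
qed

section \<open>Farey neighbours\<close>

lemma side_add: "side (a + c) (b + d) u v = side a b u v + side c d u v"
  by (simp add: side_def algebra_simps)

lemma side_direction: "side p q q p = 0"
  by (simp add: side_def)

fun shift_edge :: "int \<Rightarrow> int \<Rightarrow> edge \<Rightarrow> edge" where
  "shift_edge x y (Ver i j) = Ver (i + x) (j + y)"
| "shift_edge x y (Hor i j) = Hor (i + x) (j + y)"
| "shift_edge x y (Dia i j) = Dia (i + x) (j + y)"

lemma twice_mid_shift_edge:
  "twice_mid (shift_edge x y e) = (fst (twice_mid e) + 2 * x, snd (twice_mid e) + 2 * y)"
  by (cases e) simp_all

lemma shift_edge_shift_edge_neg [simp]: "shift_edge x y (shift_edge (- x) (- y) e) = e"
  by (cases e) simp_all

lemma edge_gen_shift_edge [simp]: "edge_gen (shift_edge x y e) = edge_gen e"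
  by (cases e) simp_all

declare crossing_time.simps [simp del]

locale farey_pair =
  fixes a b c d :: int
  assumes a_nonneg: "0 \<le> a" and b_pos: "0 < b" and c_pos: "0 < c" and d_nonneg: "0 \<le> d"
    and det: "b * c = a * d + 1"
begin

abbreviation "side_r \<equiv> side a b"
abbreviation "side_s \<equiv> side c d"
abbreviation "side_t \<equiv> side (a + c) (b + d)"
abbreviation "time_t \<equiv> crossing_time (a + c) (b + d)"

lemma side_mediant_ba: "side_t b a = 1"
  using det by (simp add: side_def algebra_simps)

lemma side_mediant_translate:
  "side_t (u + b) (v + a) = side_t u v + 1" "side_t (u + 2 * b) (v + 2 * a) = side_t u v + 2"
  using det by (simp_all add: side_def algebra_simps)

lemma side_mediant_row: "side_t u a = 1 + (u - b) * (a + c)"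
  using det by (simp add: side_def algebra_simps)

lemma side_mediant_column: "side_t b v = 1 + (a - v) * (b + d)"
  using det by (simp add: side_def algebra_simps)

text \<open>Since \<open>b c - a d = 1\<close>, the vectors \<open>(b, a)\<close> and \<open>(d, c)\<close> form a basis of \<open>\<int>\<^sup>2\<close>, and the
  coordinates of a lattice point in this basis are its sides with respect to the two lines.\<close>
lemma lattice_coords:
  "u = b * side_s u v - d * side_r u v" "v = a * side_s u v - c * side_r u v"
proof -
  have "b * side_s u v - d * side_r u v = u * (b * c - a * d)"
    "a * side_s u v - c * side_r u v = v * (b * c - a * d)"
    by (simp_all add: side_def algebra_simps)
  then show "u = b * side_s u v - d * side_r u v" "v = a * side_s u v - c * side_r u v"
    using det by simp_all
qed

lemma lattice_coords_lower:
  assumes "n \<le> side_s u v" "m \<le> - side_r u v"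
  shows "n * b + m * d \<le> u" "n * a + m * c \<le> v"
proof -
  have "b * n \<le> b * side_s u v" "d * m \<le> d * (- side_r u v)"
    "a * n \<le> a * side_s u v" "c * m \<le> c * (- side_r u v)"
    using mult_left_mono[OF assms(1)] mult_left_mono[OF assms(2)] a_nonneg b_pos c_pos d_nonneg
    by simp_all
  then show "n * b + m * d \<le> u" "n * a + m * c \<le> v"
    using lattice_coords[where u = u and v = v] by (simp_all add: algebra_simps)
qed

lemma lattice_coords_upper:
  assumes "side_s u v \<le> - n" "m \<le> side_r u v"
  shows "u \<le> - (n * b + m * d)" "v \<le> - (n * a + m * c)"
  using lattice_coords_lower[of n "- u" "- v" m] assms by (simp_all add: side_def)

lemma lattice_coords_ba: "side_r u v = 0 \<Longrightarrow> side_s u v = 1 \<Longrightarrow> (u, v) = (b, a)"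
  using lattice_coords[where u = u and v = v] by (simp del: side_def)

lemma lattice_coords_dc: "side_r u v = - 1 \<Longrightarrow> side_s u v = 0 \<Longrightarrow> (u, v) = (d, c)"
  using lattice_coords[where u = u and v = v] by (simp del: side_def)

text \<open>A lattice point on which two of the sides disagree has coordinates outside the range assumed in
  each of the following lemmas.\<close>
lemma r_pos_iff:
  assumes "- (b + d) < u" "u < 2 * b" "(u, v) \<noteq> (b, a)"
  shows "0 < side_r u v \<longleftrightarrow> 0 < side_t u v"
  using lattice_coords_upper[of u v 1 1] lattice_coords_lower[of 2 u v 0] lattice_coords_ba
    side_add[of a c b d u v] assms by smt

lemma r_neg_iff:
  assumes "- b < u" "u < b + d"
  shows "side_r u v < 0 \<longleftrightarrow> side_t u v < 0"
  using lattice_coords_upper[of u v 1 0] lattice_coords_lower[of 1 u v 1]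
    side_add[of a c b d u v] assms by smt

lemma r_sgn_iff_row:
  assumes "- a < v" "v < a"
  shows "0 < side_r u v \<longleftrightarrow> 0 < side_t u v" "side_r u v < 0 \<longleftrightarrow> side_t u v < 0"
  using lattice_coords_upper[of u v 1 1] lattice_coords_lower[of 1 u v 0]
    lattice_coords_upper[of u v 1 0] lattice_coords_lower[of 1 u v 1]
    side_add[of a c b d u v] assms c_pos by smt+

lemma s_pos_iff:
  assumes "0 < u" "u < b + 2 * d"
  shows "0 < side_s u v \<longleftrightarrow> 0 < side_t (u + b) (v + a)"
  using lattice_coords_upper[of u v 0 0] lattice_coords_lower[of 1 u v 2]
    side_add[of a c b d u v] side_mediant_translate(1) assms by smt

lemma s_neg_iff:
  assumes "- b < u" "u < 2 * d"
  shows "side_s u v < 0 \<longleftrightarrow> side_t (u + b) (v + a) < 0"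
  using lattice_coords_upper[of u v 1 0] lattice_coords_lower[of 0 u v 2]
    side_add[of a c b d u v] side_mediant_translate(1) assms by smt

lemma s_sgn_iff_row:
  assumes "0 < v" "v < 2 * c"
  shows "0 < side_s u v \<longleftrightarrow> 0 < side_t (u + b) (v + a)"
    "side_s u v < 0 \<longleftrightarrow> side_t (u + b) (v + a) < 0"
  using lattice_coords_upper[of u v 0 0] lattice_coords_lower[of 1 u v 2]
    lattice_coords_upper[of u v 1 0] lattice_coords_lower[of 0 u v 2]
    side_add[of a c b d u v] side_mediant_translate(1) assms a_nonneg by smt+

lemma s_nonpos_iff:
  assumes "0 < u" "u < b + 3 * d" "(u, v) \<noteq> (d, c)"
  shows "side_s u v \<le> 0 \<longleftrightarrow> side_t (u + 2 * b) (v + 2 * a) \<le> 0"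
  using lattice_coords_upper[of u v 0 0] lattice_coords_lower[of 1 u v 3] lattice_coords_dc
    side_add[of a c b d u v] side_mediant_translate(2) assms by smt

lemma crosses_r_iff:
  "crosses a b (Ver i j) \<longleftrightarrow> 0 < i \<and> i < b \<and> 0 < side_r i j \<and> side_r i (j + 1) < 0"
  "crosses a b (Hor i j) \<longleftrightarrow> 0 \<le> i \<and> i < b \<and> side_r i j < 0 \<and> 0 < side_r (i + 1) j"
  "crosses a b (Dia i j) \<longleftrightarrow> 0 \<le> i \<and> i < b \<and> side_r i (j + 1) < 0 \<and> 0 < side_r (i + 1) j"
  using crosses_Ver_iff crosses_Hor_iff crosses_Dia_iff a_nonneg b_pos by auto

lemma crosses_s_iff:
  "crosses c d (Ver i j) \<longleftrightarrow> 0 < i \<and> i < d \<and> 0 < side_s i j \<and> side_s i (j + 1) < 0"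
  "crosses c d (Hor i j) \<longleftrightarrow> 0 \<le> i \<and> i < d \<and> side_s i j < 0 \<and> 0 < side_s (i + 1) j"
  "crosses c d (Dia i j) \<longleftrightarrow> 0 \<le> i \<and> i < d \<and> side_s i (j + 1) < 0 \<and> 0 < side_s (i + 1) j"
  using crosses_Ver_iff crosses_Hor_iff crosses_Dia_iff c_pos d_nonneg by auto

lemma crosses_t_iff:
  "crosses (a + c) (b + d) (Ver i j) \<longleftrightarrow> 0 < i \<and> i < b + d \<and> 0 < side_t i j \<and> side_t i (j + 1) < 0"
  "crosses (a + c) (b + d) (Hor i j) \<longleftrightarrow> 0 \<le> i \<and> i < b + d \<and> side_t i j < 0 \<and> 0 < side_t (i + 1) j"
  "crosses (a + c) (b + d) (Dia i j) \<longleftrightarrow> 0 \<le> i \<and> i < b + d \<and> side_t i (j + 1) < 0 \<and> 0 < side_t (i + 1) j"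
  using crosses_Ver_iff crosses_Hor_iff crosses_Dia_iff a_nonneg b_pos c_pos d_nonneg by auto

lemma crosses_r_bounds:
  "crosses a b (Ver i j) \<Longrightarrow> 0 < i \<and> i < b \<and> 0 \<le> j \<and> j < a"
  "crosses a b (Hor i j) \<Longrightarrow> 0 \<le> i \<and> i < b \<and> 0 < j \<and> j < a"
  "crosses a b (Dia i j) \<Longrightarrow> 0 \<le> i \<and> i < b \<and> 0 \<le> j \<and> j < a"
  using crosses_Ver_bounds crosses_Hor_bounds crosses_Dia_bounds a_nonneg b_pos by (meson less_imp_le)+

lemma crosses_s_bounds:
  "crosses c d (Ver i j) \<Longrightarrow> 0 < i \<and> i < d \<and> 0 \<le> j \<and> j < c"
  "crosses c d (Hor i j) \<Longrightarrow> 0 \<le> i \<and> i < d \<and> 0 < j \<and> j < c"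
  "crosses c d (Dia i j) \<Longrightarrow> 0 \<le> i \<and> i < d \<and> 0 \<le> j \<and> j < c"
  using crosses_Ver_bounds crosses_Hor_bounds crosses_Dia_bounds c_pos d_nonneg by (meson less_imp_le)+

text \<open>The edges at the corner \<open>(b, a)\<close> of the path, which \<open>L\<^sub>t\<close> passes just above.\<close>
definition middle_edges :: "edge list" where
  "middle_edges =
    (if 0 < a then [Hor (b - 1) a] else []) @ [Dia (b - 1) a] @ (if 0 < d then [Ver b a] else [])"

lemma b_c_eq_1_if_a_eq_0: "a = 0 \<Longrightarrow> b = 1 \<and> c = 1"
  using det b_pos c_pos by (simp add: pos_zmult_eq_1_iff)

lemma b_c_eq_1_if_d_eq_0: "d = 0 \<Longrightarrow> b = 1 \<and> c = 1"
  using det b_pos c_pos by (simp add: pos_zmult_eq_1_iff)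

lemma side_mediant_row_neg:
  assumes "u < b" "0 < a"
  shows "side_t u a < 0"
proof -
  have "(u - b) * (a + c) \<le> - 1 * (a + c)" using assms c_pos by (intro mult_right_mono) auto
  then show ?thesis using side_mediant_row[of u] assms c_pos by simp
qed

lemma side_mediant_column_neg:
  assumes "a < v" "0 < d"
  shows "side_t b v < 0"
proof -
  have "(a - v) * (b + d) \<le> - 1 * (b + d)" using assms b_pos by (intro mult_right_mono) auto
  then show ?thesis using side_mediant_column[of v] assms b_pos by simp
qed

lemma crosses_r_imp_t:
  assumes e: "crosses a b e"
  shows "crosses (a + c) (b + d) e"
proof (cases e)
  case (Ver i j)
  then show ?thesis using e r_pos_iff[of i j] r_neg_iff[of i "j + 1"] d_nonneg
    by (simp add: crosses_r_iff crosses_t_iff)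
next
  case (Hor i j)
  then have "(i + 1, j) \<noteq> (b, a)"
    using e side_direction[of a b] by (auto simp: crosses_r_iff)
  then show ?thesis using e Hor r_pos_iff[of "i + 1" j] r_neg_iff[of i j] d_nonneg
    by (simp add: crosses_r_iff crosses_t_iff)
next
  case (Dia i j)
  then have "(i + 1, j) \<noteq> (b, a)"
    using e side_direction[of a b] by (auto simp: crosses_r_iff)
  then show ?thesis using e Dia r_pos_iff[of "i + 1" j] r_neg_iff[of i "j + 1"] d_nonneg
    by (simp add: crosses_r_iff crosses_t_iff)
qed

lemma crosses_middle: "e \<in> set middle_edges \<Longrightarrow> crosses (a + c) (b + d) e"
  using side_mediant_column[of a] side_mediant_column[of "a + 1"] a_nonneg b_pos c_pos d_nonneg
  by (auto simp: middle_edges_def crosses_t_iff side_def algebra_simps)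

lemma crosses_s_imp_t: "crosses c d e \<Longrightarrow> crosses (a + c) (b + d) (shift_edge b a e)"
  using s_pos_iff s_neg_iff b_pos
  by (cases e) (auto simp: crosses_s_iff crosses_t_iff algebra_simps)

lemma column_sign_change:
  assumes "0 < side_t b j" "side_t b (j + 1) < 0"
  shows "j = a \<and> 0 < d"
proof -
  have pos: "0 < b + d" using b_pos d_nonneg by simp
  have "0 \<le> (a - j) * (b + d)" using assms(1) side_mediant_column[of j] by simp
  then have "j \<le> a" using pos by (simp add: zero_le_mult_iff)
  moreover have "(a - j - 1) * (b + d) < 0"
    using assms(2) side_mediant_column[of "j + 1"] by (simp add: algebra_simps)
  then have "a \<le> j" using pos by (simp add: mult_less_0_iff)
  ultimately have "j = a" by simp
  then have "1 < b + d" using assms(2) side_mediant_column[of "j + 1"] by simp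
  then show ?thesis using \<open>j = a\<close> b_c_eq_1_if_d_eq_0 d_nonneg by fastforce
qed

lemma crosses_t_Ver_cases:
  assumes "crosses (a + c) (b + d) (Ver i j)"
  shows "crosses a b (Ver i j) \<or> Ver i j \<in> set middle_edges \<or> crosses c d (Ver (i - b) (j - a))"
proof -
  have t: "0 < i" "i < b + d" "0 < side_t i j" "side_t i (j + 1) < 0"
    using assms by (simp_all add: crosses_t_iff)
  consider "i < b" | "i = b" | "b < i" by linarith
  then show ?thesis
  proof cases
    case 1
    then show ?thesis using t r_pos_iff[of i j] r_neg_iff[of i "j + 1"] d_nonneg
      by (simp add: crosses_r_iff)
  next
    case 2
    then show ?thesis using t column_sign_change[of j] by (simp add: middle_edges_def)
  next
    case 3
    then have "crosses c d (Ver (i - b) (j - a))"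
      using t s_pos_iff[of "i - b" "j - a"] s_neg_iff[of "i - b" "j - a + 1"]
      by (simp add: crosses_s_iff algebra_simps)
    then show ?thesis by simp
  qed
qed

lemma crosses_t_Hor_cases:
  assumes "crosses (a + c) (b + d) (Hor i j)"
  shows "crosses a b (Hor i j) \<or> Hor i j \<in> set middle_edges \<or> crosses c d (Hor (i - b) (j - a))"
proof -
  have t: "0 \<le> i" "i < b + d" "side_t i j < 0" "0 < side_t (i + 1) j"
    using assms by (simp_all add: crosses_t_iff)
  consider "i + 1 = b" "j = a" | "i + 1 \<le> b" "(i + 1, j) \<noteq> (b, a)" | "b \<le> i" by fastforce
  then show ?thesis
  proof cases
    case 1
    have "0 < a"
      using t 1 b_c_eq_1_if_a_eq_0 a_nonneg by (cases "a = 0") (auto simp: side_def)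
    then show ?thesis using 1 by (auto simp: middle_edges_def)
  next
    case 2
    then show ?thesis using t r_pos_iff[of "i + 1" j] r_neg_iff[of i j] d_nonneg
      by (simp add: crosses_r_iff)
  next
    case 3
    then have "crosses c d (Hor (i - b) (j - a))"
      using t b_pos s_neg_iff[of "i - b" "j - a"] s_pos_iff[of "i - b + 1" "j - a"]
      by (simp add: crosses_s_iff algebra_simps)
    then show ?thesis by simp
  qed
qed

lemma crosses_t_Dia_cases:
  assumes "crosses (a + c) (b + d) (Dia i j)"
  shows "crosses a b (Dia i j) \<or> Dia i j \<in> set middle_edges \<or> crosses c d (Dia (i - b) (j - a))"
proof -
  have t: "0 \<le> i" "i < b + d" "side_t i (j + 1) < 0" "0 < side_t (i + 1) j"
    using assms by (simp_all add: crosses_t_iff)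
  consider "i + 1 = b" "j = a" | "i + 1 \<le> b" "(i + 1, j) \<noteq> (b, a)" | "b \<le> i" by fastforce
  then show ?thesis
  proof cases
    case 1
    then show ?thesis by (auto simp: middle_edges_def)
  next
    case 2
    then show ?thesis using t r_pos_iff[of "i + 1" j] r_neg_iff[of i "j + 1"] d_nonneg
      by (simp add: crosses_r_iff)
  next
    case 3
    then have "crosses c d (Dia (i - b) (j - a))"
      using t b_pos s_neg_iff[of "i - b" "j - a + 1"] s_pos_iff[of "i - b + 1" "j - a"]
      by (simp add: crosses_s_iff algebra_simps)
    then show ?thesis by simp
  qed
qed

lemma crosses_mediant_eq:
  "{e. crosses (a + c) (b + d) e} =
    {e. crosses a b e} \<union> set middle_edges \<union> shift_edge b a ` {e. crosses c d e}"
  (is "_ = ?path")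
proof
  show "{e. crosses (a + c) (b + d) e} \<subseteq> ?path"
  proof
    fix e assume "e \<in> {e. crosses (a + c) (b + d) e}"
    then have "crosses a b e \<or> e \<in> set middle_edges \<or> crosses c d (shift_edge (- b) (- a) e)"
      using crosses_t_Ver_cases crosses_t_Hor_cases crosses_t_Dia_cases by (cases e) auto
    then show "e \<in> ?path"
      by (auto intro: image_eqI[of e "shift_edge b a" "shift_edge (- b) (- a) e"])
  qed
qed (use crosses_r_imp_t crosses_middle crosses_s_imp_t in auto)

lemma crosses_r_pos: "crosses a b e \<Longrightarrow> 0 < a"
  using crosses_pos a_nonneg b_pos by fastforce

lemma crosses_s_pos: "crosses c d e \<Longrightarrow> 0 < d"
  using crosses_pos c_pos d_nonneg by fastforce

lemma mediant_pos: "0 < a + c" "0 < b + d"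
  using a_nonneg b_pos c_pos d_nonneg by simp_all

lemma crossing_time_r_less:
  assumes e: "crosses a b e" and e': "crosses a b e'" and less: "crossing_time a b e < crossing_time a b e'"
  shows "time_t e < time_t e'"
proof -
  have "precedes a b e e'"
    using less crossing_time_less_iff crosses_r_pos[OF e] b_pos by blast
  then have "precedes (a + c) (b + d) e e'"
    using e e' d_nonneg c_pos
    by (cases e; cases e') (auto dest!: crosses_r_bounds simp: r_pos_iff r_neg_iff r_sgn_iff_row)
  then show ?thesis using crossing_time_less_iff[OF mediant_pos] by blast
qed

lemma crossing_time_s_less:
  assumes e: "crosses c d e" and e': "crosses c d e'" and less: "crossing_time c d e < crossing_time c d e'"
  shows "time_t (shift_edge b a e) < time_t (shift_edge b a e')"
proof -
  have "precedes c d e e'"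
    using less crossing_time_less_iff crosses_s_pos[OF e] c_pos by blast
  then have "precedes (a + c) (b + d) (shift_edge b a e) (shift_edge b a e')"
    using e e' b_pos a_nonneg
    by (cases e; cases e')
      (auto dest!: crosses_s_bounds simp: s_pos_iff s_neg_iff s_sgn_iff_row algebra_simps)
  then show ?thesis using crossing_time_less_iff[OF mediant_pos] by blast
qed

lemma crossing_time_middle:
  "time_t (Hor (b - 1) a) < time_t (Dia (b - 1) a)"
  "time_t (Dia (b - 1) a) < time_t (Ver b a)"
  "time_t (Hor (b - 1) a) < time_t (Ver b a)"
  unfolding crossing_time_less_iff[OF mediant_pos] using side_mediant_ba by simp_all

lemma crossing_time_r_less_middle:
  assumes "crosses a b e" "m \<in> set middle_edges"
  shows "time_t e < time_t m"
proof -
  have "time_t e < time_t (Hor (b - 1) a)"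
    unfolding crossing_time_less_iff[OF mediant_pos] using assms(1) side_mediant_row_neg
    by (cases e) (auto dest!: crosses_r_bounds)
  then show ?thesis
    using assms crosses_r_pos crossing_time_middle by (auto simp: middle_edges_def split: if_splits)
qed

lemma crossing_time_middle_less_s:
  assumes "crosses c d e" "m \<in> set middle_edges"
  shows "time_t m < time_t (shift_edge b a e)"
proof -
  have "time_t (Ver b a) < time_t (shift_edge b a e)"
    unfolding crossing_time_less_iff[OF mediant_pos] using assms(1) side_mediant_column_neg
    by (cases e) (auto dest!: crosses_s_bounds)
  then show ?thesis
    using assms crosses_s_pos crossing_time_middle by (auto simp: middle_edges_def split: if_splits)
qed

lemma sorted_crossing_time_r:
  assumes "crossing_list a b rs"
  shows "sorted_wrt (\<lambda>e e'. time_t e < time_t e') rs"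
proof (cases rs)
  case (Cons e _)
  then have "0 < a" using assms crosses_r_pos by (auto simp: crossing_list_def)
  then have "sorted_wrt (\<lambda>e e'. crossing_time a b e < crossing_time a b e') rs"
    using assms crossing_list_strict b_pos by blast
  then show ?thesis
    using assms crossing_time_r_less by (elim sorted_wrt_mono_rel[rotated]) (auto simp: crossing_list_def)
qed simp

lemma sorted_crossing_time_s:
  assumes "crossing_list c d ss"
  shows "sorted_wrt (\<lambda>e e'. time_t e < time_t e') (map (shift_edge b a) ss)"
proof (cases ss)
  case (Cons e _)
  then have "0 < d" using assms crosses_s_pos by (auto simp: crossing_list_def)
  then have "sorted_wrt (\<lambda>e e'. crossing_time c d e < crossing_time c d e') ss"
    using assms crossing_list_strict c_pos by blast
  then show ?thesis
    using assms crossing_time_s_less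
    by (auto simp: sorted_wrt_map crossing_list_def elim!: sorted_wrt_mono_rel[rotated])
qed simp

lemma crossing_list_mediant:
  assumes r: "crossing_list a b rs" and s: "crossing_list c d ss"
  shows "crossing_list (a + c) (b + d) (rs @ middle_edges @ map (shift_edge b a) ss)"
proof -
  let ?less = "\<lambda>e e'. time_t e < time_t e'"
  have rs: "e \<in> set rs \<longleftrightarrow> crosses a b e" and ss: "e \<in> set ss \<longleftrightarrow> crosses c d e" for e
    using r s by (simp_all add: crossing_list_def)
  have "?less e (shift_edge b a e')" if "crosses a b e" "crosses c d e'" for e e'
    using crossing_time_r_less_middle[OF that(1)] crossing_time_middle_less_s[OF that(2)]
    by (fastforce simp: middle_edges_def)
  moreover have "sorted_wrt ?less middle_edges"
    using crossing_time_middle by (auto simp: middle_edges_def)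
  ultimately have "sorted_wrt ?less (rs @ middle_edges @ map (shift_edge b a) ss)"
    using rs ss sorted_crossing_time_r[OF r] sorted_crossing_time_s[OF s]
      crossing_time_r_less_middle crossing_time_middle_less_s
    by (auto simp: sorted_wrt_append)
  moreover have "set (rs @ middle_edges @ map (shift_edge b a) ss) = {e. crosses (a + c) (b + d) e}"
    using rs ss by (auto simp: crosses_mediant_eq)
  ultimately show ?thesis
    using crossing_list_strict[OF mediant_pos] by simp
qed

lemma edge_letter_r:
  assumes e: "crosses a b e"
  shows "edge_letter_int (a + c) (b + d) e =
    (if crossing_time a b e = 1 / 2 then inv_letter (edge_letter_int a b e) else edge_letter_int a b e)"
proof -
  obtain u v where uv: "twice_mid e = (u, v)" by force
  have ab: "0 < a" "0 < b" using crosses_r_pos[OF e] b_pos by simp_all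
  have "0 < u \<and> u < 2 * b" using e uv by (cases e) (auto dest!: crosses_r_bounds)
  moreover have "crossing_time a b e = 1 / 2 \<longleftrightarrow> (u, v) = (b, a)"
    using crossing_time_half_iff[OF ab e] uv by simp
  ultimately show ?thesis
    using r_pos_iff[of u v] side_direction[of a b] side_mediant_ba d_nonneg
    by (auto simp: edge_letter_int_def inv_letter_def uv not_le[symmetric])
qed

lemma edge_letter_s:
  assumes e: "crosses c d e"
  shows "edge_letter_int (a + c) (b + d) (shift_edge b a e) =
    (if crossing_time c d e = 1 / 2 then inv_letter (edge_letter_int c d e) else edge_letter_int c d e)"
proof -
  obtain u v where uv: "twice_mid e = (u, v)" by force
  have cd: "0 < c" "0 < d" using crosses_s_pos[OF e] c_pos by simp_all
  have "0 < u \<and> u < 2 * d" using e uv by (cases e) (auto dest!: crosses_s_bounds)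
  moreover have "crossing_time c d e = 1 / 2 \<longleftrightarrow> (u, v) = (d, c)"
    using crossing_time_half_iff[OF cd e] uv by simp
  moreover have "side_t (d + 2 * b) (c + 2 * a) = 1"
    using side_mediant_translate(2)[of d c] det by (simp add: side_def algebra_simps)
  ultimately show ?thesis
    using s_nonpos_iff[of u v] side_direction[of c d] b_pos
    by (auto simp: edge_letter_int_def inv_letter_def uv twice_mid_shift_edge)
qed

lemma middle_letters:
  "map (edge_letter_int (a + c) (b + d)) middle_edges =
    (if 0 < a then [lx] else []) @ [ly] @ (if 0 < d then [lz] else [])"
  using side_mediant_row[of "2 * b - 1"] det a_nonneg b_pos c_pos d_nonneg
  by (auto simp: middle_edges_def edge_letter_int_def side_def algebra_simps)


lemma crossing_list_r_eq_Nil: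
  assumes "crossing_list a b rs" "a = 0"
  shows "rs = []"
proof -
  have "set rs = {}" using assms crosses_r_pos by (auto simp: crossing_list_def)
  then show ?thesis by simp
qed

lemma crossing_list_s_eq_Nil:
  assumes "crossing_list c d ss" "d = 0"
  shows "ss = []"
proof -
  have "set ss = {}" using assms crosses_s_pos by (auto simp: crossing_list_def)
  then show ?thesis by simp
qed

lemma map_edge_letter_r:
  assumes rs: "crossing_list a b rs" and w: "map (edge_letter_int a b) rs = u @ [\<beta>] @ inv_word u"
  shows "map (edge_letter_int (a + c) (b + d)) rs = u @ [inv_letter \<beta>] @ inv_word u"
proof -
  have "0 < a" using crossing_list_r_eq_Nil[OF rs] w a_nonneg by fastforce
  then show ?thesis using rs w b_pos edge_letter_r
    by (intro map_update_middle[where p = a and q = b and f = "edge_letter_int a b"])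
      (auto simp: crossing_list_def)
qed

lemma map_edge_letter_s:
  assumes ss: "crossing_list c d ss" and w: "map (edge_letter_int c d) ss = w @ [\<alpha>] @ inv_word w"
  shows "map (edge_letter_int (a + c) (b + d) \<circ> shift_edge b a) ss = w @ [inv_letter \<alpha>] @ inv_word w"
proof -
  have "0 < d" using crossing_list_s_eq_Nil[OF ss] w d_nonneg by fastforce
  then show ?thesis using ss w c_pos edge_letter_s
    by (intro map_update_middle[where p = c and q = d and f = "edge_letter_int c d"])
      (auto simp: crossing_list_def)
qed
end

section \<open>The recursion for the words\<close>

lemma farey_vertex_mediant:
  "farey_vertex ((a, b), (p, q), (c, d)) \<Longrightarrow> p = a + c \<and> q = b + d \<and> b * c = a * d + 1"
proof (induction "((a, b), (p, q), (c, d))" arbitrary: a b p q c d rule: farey_vertex.induct)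
  case (left a b c d e f)
  then show ?case by (simp add: algebra_simps)
next
  case (right a b c d e f)
  then show ?case by (simp add: algebra_simps)
qed simp

lemma gcd_eq_1_of_det:
  assumes "(x::nat) * u = y * v + 1"
  shows "gcd x y = 1"
proof -
  have "gcd x y dvd x * u - y * v" by (simp add: dvd_diff_nat)
  with assms show ?thesis by simp
qed

lemma omega_coprime: "gcd x y = 1 \<Longrightarrow> 0 < x \<Longrightarrow> 0 < y \<Longrightarrow> omega (x, y) = omega_geom x y"
  by (simp add: omega_def Let_def)

lemma omega_mediant:
  fixes a b c d :: nat
  assumes unimodular: "b * c = a * d + 1"
  obtains rw sw where
    "omega (a + c, b + d) = rw @ (if 0 < a then [lx] else []) @ [ly] @ (if 0 < d then [lz] else []) @ sw"
    "a = 0 \<Longrightarrow> rw = []" "d = 0 \<Longrightarrow> sw = []"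
    "\<And>u \<beta>. 0 < a \<Longrightarrow> omega (a, b) = u @ [\<beta>] @ inv_word u \<Longrightarrow> rw = u @ [inv_letter \<beta>] @ inv_word u"
    "\<And>w \<alpha>. 0 < d \<Longrightarrow> omega (c, d) = w @ [\<alpha>] @ inv_word w \<Longrightarrow> sw = w @ [inv_letter \<alpha>] @ inv_word w"
proof -
  have "b * c \<noteq> 0" using unimodular by simp
  then have b: "0 < b" and c: "0 < c" by simp_all
  have det_int: "int b * int c = int a * int d + 1"
    using unimodular by (metis of_nat_add of_nat_mult of_nat_1)
  interpret farey_pair "int a" "int b" "int c" "int d"
    by unfold_locales (use b c det_int in \<open>simp_all only: of_nat_0_le_iff of_nat_0_less_iff\<close>)
  obtain rs where rs: "crossing_list a b rs" using crossing_list_exists[of a b] by auto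
  obtain ss where ss: "crossing_list c d ss" using crossing_list_exists[of c d] by auto
  let ?letter = "edge_letter (a + c) (b + d)"
  have "gcd (b + d) (a + c) = 1"
    using unimodular by (intro gcd_eq_1_of_det[of _ c _ d]) (simp add: algebra_simps)
  then have "omega (a + c, b + d) = map ?letter (rs @ middle_edges @ map (shift_edge b a) ss)"
    using b c crossing_list_mediant[OF rs ss] by (simp add: omega_coprime omega_geom_eq gcd.commute)
  then have "omega (a + c, b + d) =
      map ?letter rs @ (if 0 < a then [lx] else []) @ [ly] @ (if 0 < d then [lz] else []) @
      map (?letter \<circ> shift_edge b a) ss"
    using middle_letters by (simp add: edge_letter_eq)
  then show thesis
  proof (rule that)
    show "map ?letter rs = []" if "a = 0" using crossing_list_r_eq_Nil[OF rs] that by simp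
    show "map (?letter \<circ> shift_edge b a) ss = []" if "d = 0"
      using crossing_list_s_eq_Nil[OF ss] that by simp
  next
    fix u \<beta> assume a: "0 < a" and "omega (a, b) = u @ [\<beta>] @ inv_word u"
    moreover have "gcd b a = 1" using unimodular by (rule gcd_eq_1_of_det)
    ultimately have "map (edge_letter_int a b) rs = u @ [\<beta>] @ inv_word u"
      using rs b by (simp add: omega_coprime omega_geom_eq gcd.commute edge_letter_eq)
    then show "map ?letter rs = u @ [inv_letter \<beta>] @ inv_word u"
      using map_edge_letter_r[OF rs] by (simp add: edge_letter_eq)
  next
    fix w \<alpha> assume d: "0 < d" and "omega (c, d) = w @ [\<alpha>] @ inv_word w"
    moreover have "gcd c d = 1"
      using unimodular by (intro gcd_eq_1_of_det[of c b d a]) (simp add: mult.commute)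
    ultimately have "map (edge_letter_int c d) ss = w @ [\<alpha>] @ inv_word w"
      using ss c by (simp add: omega_coprime omega_geom_eq edge_letter_eq)
    then show "map (?letter \<circ> shift_edge b a) ss = w @ [inv_letter \<alpha>] @ inv_word w"
      using map_edge_letter_s[OF ss] by (simp add: edge_letter_eq)
  qed
qed

theorem proposition3p9:
  fixes r t s :: frac
  assumes V: "farey_vertex (r, t, s)"
    and tpos: "fst t > 0" "snd t > 0"
  shows
    "(r = (0,1) \<and> s \<noteq> (1,0) \<longrightarrow>
       (\<forall>w \<alpha>. \<alpha> \<in> {lx, ly, lz} \<and> omega s = w @ [\<alpha>] @ inv_word w \<longrightarrow>
          omega t = [ly, lz] @ w @ [inv_letter \<alpha>] @ inv_word w))
   \<and> (r \<noteq> (0,1) \<and> s = (1,0) \<longrightarrow>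
       (\<forall>u \<beta>. \<beta> \<in> {lx, ly, lz} \<and> omega r = u @ [\<beta>] @ inv_word u \<longrightarrow>
          omega t = u @ [inv_letter \<beta>] @ inv_word u @ [lx, ly]))
   \<and> (r \<noteq> (0,1) \<and> s \<noteq> (1,0) \<longrightarrow>
       (\<forall>u \<beta> w \<alpha>. \<beta> \<in> {lx, ly, lz} \<and> \<alpha> \<in> {lx, ly, lz} \<and>
          omega r = u @ [\<beta>] @ inv_word u \<and> omega s = w @ [\<alpha>] @ inv_word w \<longrightarrow>
          omega t = u @ [inv_letter \<beta>] @ inv_word u @ [lx, ly, lz] @ w @ [inv_letter \<alpha>] @ inv_word w))"
proof -
  obtain a b c d p q where r: "r = (a, b)" and s: "s = (c, d)" and t: "t = (p, q)"
    by (cases r, cases s, cases t)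
  with V have "p = a + c" "q = b + d" and unimodular: "b * c = a * d + 1"
    using farey_vertex_mediant by simp_all
  have r_zero: "r = (0, 1) \<longleftrightarrow> a = 0" and s_infinity: "s = (1, 0) \<longleftrightarrow> d = 0"
    using unimodular by (auto simp: r s)
  obtain rw sw where
    "omega (a + c, b + d) = rw @ (if 0 < a then [lx] else []) @ [ly] @ (if 0 < d then [lz] else []) @ sw"
    and "a = 0 \<Longrightarrow> rw = []" "d = 0 \<Longrightarrow> sw = []"
    and "\<And>u \<beta>. 0 < a \<Longrightarrow> omega (a, b) = u @ [\<beta>] @ inv_word u \<Longrightarrow> rw = u @ [inv_letter \<beta>] @ inv_word u"
    and "\<And>w \<alpha>. 0 < d \<Longrightarrow> omega (c, d) = w @ [\<alpha>] @ inv_word w \<Longrightarrow> sw = w @ [inv_letter \<alpha>] @ inv_word w"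
    by (fact omega_mediant[OF unimodular])
  then show ?thesis
    unfolding r_zero s_infinity unfolding r s t \<open>p = a + c\<close> \<open>q = b + d\<close> by auto
qed

end
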